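(* Let $f: (\mathbb{R}^{+})^n \to (\mathbb{R}^{+})^n$ be homogeneous and monotone, and suppose its recession function $\hat f$ exists. Suppose the only eigenvectors of $\hat f$ in $(\mathbb{R}^{+})^n$ are the positive scalar multiples of $(1,\dots,1)$. Then for all $\lambda,\mu \in \mathbb{R}^{+}$ the slice space $S^\lambda_\mu(f) = \{x \in (\mathbb{R}^{+})^n : \mu x \le f(x) \le \lambda x\}$ is bounded in the Hilbert projective metric.
   Context: Homogeneous: $f(\lambda x) = \lambda f(x)$ for $\lambda>0$; monotone: $x\le y$ componentwise implies $f(x)\le f(y)$. The recession function exists if for each $x \in (\mathbb{R}^{+})^n$ the limit $\hat f(x) = \lim_{k\to\infty} f(x_1^k,\dots,x_n^k)^{1/k}$ (the $k$-th root taken componentwise) exists in $(\mathbb{R}^{+})^n$. An eigenvector of a map $g$ is $x$ with $g(x) = \lambda x$ for some $\lambda>0$. Hilbert projective metric: $d_H(y,z) = \max_i \log(y_i/z_i) - \min_i \log(y_i/z_i)$; $A$ is bounded if $\sup_{y,z\in A} d_H(y,z)<\infty$. *)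

theory Defs
  imports "HOL-Analysis.Analysis"
begin

definition pos_cone :: "(real ^ 'n) set" where
  "pos_cone = {x. \<forall>i. 0 < x $ i}"

definition homogeneous_on_cone :: "(real ^ 'n \<Rightarrow> real ^ 'n) \<Rightarrow> bool" where
  "homogeneous_on_cone f \<longleftrightarrow>
     (\<forall>x \<in> pos_cone. \<forall>c::real. 0 < c \<longrightarrow> f (c *\<^sub>R x) = c *\<^sub>R f x)"

definition monotone_on_cone :: "(real ^ 'n \<Rightarrow> real ^ 'n) \<Rightarrow> bool" where
  "monotone_on_cone f \<longleftrightarrow>
     (\<forall>x \<in> pos_cone. \<forall>y \<in> pos_cone. (\<forall>i. x $ i \<le> y $ i) \<longrightarrow> (\<forall>i. f x $ i \<le> f y $ i))"

definition is_recession_function ::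
  "(real ^ 'n \<Rightarrow> real ^ 'n) \<Rightarrow> (real ^ 'n \<Rightarrow> real ^ 'n) \<Rightarrow> bool" where
  "is_recession_function f g \<longleftrightarrow>
     (\<forall>x \<in> pos_cone.
        g x \<in> pos_cone \<and>
        (\<lambda>k::nat. \<chi> i. (f (\<chi> j. x $ j ^ k) $ i) powr (1 / real k)) \<longlonglongrightarrow> g x)"

definition eigenvector_on_cone :: "(real ^ 'n \<Rightarrow> real ^ 'n) \<Rightarrow> real ^ 'n \<Rightarrow> bool" where
  "eigenvector_on_cone g x \<longleftrightarrow> x \<in> pos_cone \<and> (\<exists>l::real. 0 < l \<and> g x = l *\<^sub>R x)"

definition hilbert_dist :: "real ^ 'n \<Rightarrow> real ^ 'n \<Rightarrow> real" where
  "hilbert_dist y z = Max (range (\<lambda>i. ln (y $ i / z $ i))) - Min (range (\<lambda>i. ln (y $ i / z $ i)))"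

definition hilbert_bounded :: "(real ^ 'n) set \<Rightarrow> bool" where
  "hilbert_bounded A \<longleftrightarrow> (\<exists>B. \<forall>y \<in> A. \<forall>z \<in> A. hilbert_dist y z \<le> B)"

definition slice_space :: "real \<Rightarrow> real \<Rightarrow> (real ^ 'n \<Rightarrow> real ^ 'n) \<Rightarrow> (real ^ 'n) set" where
  "slice_space l m f = {x \<in> pos_cone. \<forall>i. m * x $ i \<le> f x $ i \<and> f x $ i \<le> l * x $ i}"

end

theory Submission
  imports Defs
begin

text \<open>
  In logarithmic coordinates F X = ln (f (exp X)) the map f becomes monotone and commutes with
  adding constant vectors, hence is nonexpansive in the sup-norm. A point x lies in a slice space
  exactly when F X - X is bounded (X = ln x), and Hilbert distances are controlled by the
  oscillation max X - min X. If the oscillation were unbounded on such points, rescaling by it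
  would give directions Z accumulating at some W of oscillation at least 1/2. Nonexpansiveness
  yields F (t W) / t \<longrightarrow> W, while the recession function yields
  F (t W) / t \<longrightarrow> ln (g (exp W)); so exp W is a fixed point, hence an eigenvector of g,
  hence constant: its oscillation is 0, a contradiction.
\<close>

definition vexp :: "real ^ 'n \<Rightarrow> real ^ 'n" where
  "vexp X = (\<chi> i. exp (X $ i))"

definition vln :: "real ^ 'n \<Rightarrow> real ^ 'n" where
  "vln x = (\<chi> i. ln (x $ i))"

definition log_map :: "(real ^ 'n \<Rightarrow> real ^ 'n) \<Rightarrow> real ^ 'n \<Rightarrow> real ^ 'n" where
  "log_map f X = vln (f (vexp X))"

definition osc :: "real ^ 'n \<Rightarrow> real" where
  "osc X = Max (range (\<lambda>i. X $ i)) - Min (range (\<lambda>i. X $ i))"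

lemma vexp_in_pos_cone: "vexp X \<in> pos_cone"
  by (simp add: vexp_def pos_cone_def)

lemma vexp_vln: "x \<in> pos_cone \<Longrightarrow> vexp (vln x) = x"
  by (simp add: vexp_def vln_def pos_cone_def vec_eq_iff)

lemma component_diff_le_osc: "X $ i - X $ j \<le> osc X"
  unfolding osc_def by (intro diff_mono Max_ge Min_le) auto

lemma osc_attained:
  obtains i j where "osc X = X $ i - X $ j"
proof -
  have "Max (range (\<lambda>i. X $ i)) \<in> range (\<lambda>i. X $ i)" "Min (range (\<lambda>i. X $ i)) \<in> range (\<lambda>i. X $ i)"
    by (intro Max_in Min_in; simp)+
  then obtain i j where "Max (range (\<lambda>i. X $ i)) = X $ i" "Min (range (\<lambda>i. X $ i)) = X $ j"
    by blast
  then show thesis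
    using that unfolding osc_def by metis
qed

lemma osc_le_osc_add_norm: "osc X \<le> osc Y + 2 * norm (X - Y)"
proof -
  obtain i j where "osc X = X $ i - X $ j"
    by (rule osc_attained)
  also have "\<dots> = (Y $ i - Y $ j) + ((X - Y) $ i - (X - Y) $ j)"
    by simp
  also have "\<dots> \<le> osc Y + 2 * norm (X - Y)"
    using component_diff_le_osc[of Y i j] component_le_norm_cart[of "X - Y" i]
      component_le_norm_cart[of "X - Y" j] by linarith
  finally show ?thesis .
qed

lemma exists_normalized_direction:
  assumes "1 \<le> osc X"
  obtains T :: nat and c Z
  where "osc X \<le> real T" "X = real T *\<^sub>R Z + c *\<^sub>R 1" "Z \<in> cbox (-1) 0" "1/2 \<le> osc Z"
proof -
  obtain i j where ij: "osc X = X $ i - X $ j"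
    by (rule osc_attained)
  have max: "X $ k \<le> X $ i" for k
    using component_diff_le_osc[of X k j] ij by simp
  define T where "T = nat \<lceil>osc X\<rceil>"
  have T: "osc X \<le> real T" "real T < osc X + 1"
    using assms unfolding T_def by linarith+
  then have T_pos: "0 < real T"
    using assms by linarith
  define Z where "Z = (1 / real T) *\<^sub>R (X - X $ i *\<^sub>R 1)"
  have Z: "Z $ k = (X $ k - X $ i) / real T" for k
    by (simp add: Z_def)
  have "X = real T *\<^sub>R Z + X $ i *\<^sub>R 1"
    using T_pos by (simp add: Z vec_eq_iff)
  moreover have "Z \<in> cbox (-1) 0"
  proof -
    have "X $ i - X $ k \<le> real T" for k
      using component_diff_le_osc[of X i k] T(1) by linarith
    then show ?thesis
      unfolding mem_box_cart Z using T_pos max by (auto simp: field_simps)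
  qed
  moreover have "1/2 \<le> osc Z"
  proof -
    have "1/2 \<le> osc X / real T"
      using T assms by (simp add: field_simps)
    also have "\<dots> = Z $ i - Z $ j"
      using ij by (simp add: Z diff_divide_distrib)
    also have "\<dots> \<le> osc Z"
      by (rule component_diff_le_osc)
    finally show ?thesis .
  qed
  ultimately show thesis
    using that T(1) by blast
qed

lemma hilbert_dist_le_osc_vln:
  assumes "y \<in> pos_cone" "z \<in> pos_cone"
  shows "hilbert_dist y z \<le> osc (vln y) + osc (vln z)"
proof -
  obtain i j where "osc (\<chi> i. ln (y $ i / z $ i))
      = (\<chi> i. ln (y $ i / z $ i)) $ i - (\<chi> i. ln (y $ i / z $ i)) $ j"
    by (rule osc_attained)
  then have "hilbert_dist y z = ln (y $ i / z $ i) - ln (y $ j / z $ j)"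
    by (simp add: hilbert_dist_def osc_def)
  also have "\<dots> = (vln y $ i - vln y $ j) + (vln z $ j - vln z $ i)"
  proof -
    have "ln (y $ k / z $ k) = vln y $ k - vln z $ k" for k
    proof -
      have "0 < y $ k" "0 < z $ k"
        using assms unfolding pos_cone_def by auto
      then show ?thesis
        unfolding vln_def vec_lambda_beta by (rule ln_divide_pos)
    qed
    then show ?thesis
      by simp
  qed
  also have "\<dots> \<le> osc (vln y) + osc (vln z)"
    by (intro add_mono component_diff_le_osc)
  finally show ?thesis .
qed

lemma hilbert_bounded_if_osc_vln_bounded:
  assumes "A \<subseteq> pos_cone" and "\<forall>x \<in> A. osc (vln x) \<le> B"
  shows "hilbert_bounded A"
proof -
  have "hilbert_dist y z \<le> 2 * B" if "y \<in> A" "z \<in> A" for y z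
  proof -
    have "hilbert_dist y z \<le> osc (vln y) + osc (vln z)"
      using assms(1) that by (intro hilbert_dist_le_osc_vln) auto
    moreover have "osc (vln y) \<le> B" "osc (vln z) \<le> B"
      using assms(2) that by auto
    ultimately show ?thesis
      by linarith
  qed
  then show ?thesis
    unfolding hilbert_bounded_def by blast
qed

lemma slice_space_log_bound:
  assumes "x \<in> slice_space l m f" and "0 < l" "0 < m"
  shows "\<bar>log_map f (vln x) $ i - vln x $ i\<bar> \<le> \<bar>ln l\<bar> + \<bar>ln m\<bar>"
proof -
  have x: "x \<in> pos_cone" "m * x $ i \<le> f x $ i" "f x $ i \<le> l * x $ i"
    using assms(1) unfolding slice_space_def by auto
  have x_pos: "0 < x $ i"
    using x(1) unfolding pos_cone_def by auto
  have "m \<le> f x $ i / x $ i" "f x $ i / x $ i \<le> l"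
    using x x_pos by (simp_all add: field_simps)
  then have "ln m \<le> ln (f x $ i / x $ i)" "ln (f x $ i / x $ i) \<le> ln l"
    using assms(2,3) by simp_all
  moreover have "log_map f (vln x) $ i - vln x $ i = ln (f x $ i / x $ i)"
  proof -
    have "0 < f x $ i"
      using x_pos x(2) assms(3) by (smt (verit) mult_pos_pos)
    moreover have "log_map f (vln x) = vln (f x)"
      unfolding log_map_def vexp_vln[OF x(1)] ..
    ultimately show ?thesis
      using x_pos by (simp add: vln_def ln_divide_pos)
  qed
  ultimately show ?thesis
    by linarith
qed

locale monotone_homogeneous_map =
  fixes f :: "real ^ 'n \<Rightarrow> real ^ 'n"
  assumes maps_pos_cone: "\<forall>x \<in> pos_cone. f x \<in> pos_cone"
    and homogeneous: "homogeneous_on_cone f"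
    and monotone: "monotone_on_cone f"
begin

lemma f_vexp_pos: "0 < f (vexp X) $ i"
  using maps_pos_cone vexp_in_pos_cone unfolding pos_cone_def by blast

lemma log_map_mono:
  assumes "\<And>j. X $ j \<le> Y $ j"
  shows "log_map f X $ i \<le> log_map f Y $ i"
proof -
  have "\<forall>j. vexp X $ j \<le> vexp Y $ j"
    using assms by (simp add: vexp_def)
  then have "f (vexp X) $ i \<le> f (vexp Y) $ i"
    using monotone vexp_in_pos_cone unfolding monotone_on_cone_def by blast
  then show ?thesis
    using f_vexp_pos by (simp add: log_map_def vln_def)
qed

lemma log_map_translate: "log_map f (X + c *\<^sub>R 1) = log_map f X + c *\<^sub>R 1"
proof -
  have "vexp (X + c *\<^sub>R 1) = exp c *\<^sub>R vexp X"
    by (simp add: vexp_def vec_eq_iff exp_add mult.commute)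
  moreover have "f (exp c *\<^sub>R vexp X) = exp c *\<^sub>R f (vexp X)"
    using homogeneous vexp_in_pos_cone exp_gt_zero unfolding homogeneous_on_cone_def by blast
  ultimately have "f (vexp (X + c *\<^sub>R 1)) = exp c *\<^sub>R f (vexp X)"
    by simp
  moreover have "ln (exp c * f (vexp X) $ i) = ln (f (vexp X) $ i) + c" for i
    using f_vexp_pos[of X i] by (simp add: ln_mult)
  ultimately show ?thesis
    by (simp add: log_map_def vln_def vec_eq_iff)
qed

lemma log_map_nonexpansive:
  assumes "\<And>j. \<bar>X $ j - Y $ j\<bar> \<le> c"
  shows "\<bar>log_map f X $ i - log_map f Y $ i\<bar> \<le> c"
proof -
  have "X $ j \<le> (Y + c *\<^sub>R 1) $ j" "Y $ j \<le> (X + c *\<^sub>R 1) $ j" for j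
    using assms[of j] by auto
  then have "log_map f X $ i \<le> log_map f (Y + c *\<^sub>R 1) $ i"
    "log_map f Y $ i \<le> log_map f (X + c *\<^sub>R 1) $ i"
    by (intro log_map_mono; blast)+
  then show ?thesis
    by (simp add: log_map_translate abs_le_iff)
qed

lemma log_map_scaled_dist:
  assumes "0 < T" and "\<And>j. \<bar>log_map f (T *\<^sub>R Z) $ j - T * Z $ j\<bar> \<le> A"
  shows "\<bar>log_map f (T *\<^sub>R W) $ i / T - W $ i\<bar> \<le> A / T + 2 * norm (Z - W)"
proof -
  have close: "\<bar>(T *\<^sub>R W) $ j - (T *\<^sub>R Z) $ j\<bar> \<le> T * norm (Z - W)" for j
  proof -
    have "\<bar>(T *\<^sub>R W) $ j - (T *\<^sub>R Z) $ j\<bar> = T * \<bar>(Z - W) $ j\<bar>"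
      using assms(1) by (simp add: abs_mult abs_minus_commute flip: right_diff_distrib)
    also have "\<dots> \<le> T * norm (Z - W)"
      using assms(1) component_le_norm_cart[of "Z - W" j] by (intro mult_left_mono) auto
    finally show ?thesis .
  qed
  have "\<bar>log_map f (T *\<^sub>R W) $ i - T * W $ i\<bar> \<le> A + 2 * (T * norm (Z - W))"
    using log_map_nonexpansive[OF close, of i] assms(2)[of i] close[of i] by simp
  then have "\<bar>log_map f (T *\<^sub>R W) $ i - T * W $ i\<bar> / T \<le> (A + 2 * (T * norm (Z - W))) / T"
    using assms(1) by (simp add: divide_right_mono)
  moreover have "\<bar>log_map f (T *\<^sub>R W) $ i / T - W $ i\<bar> = \<bar>log_map f (T *\<^sub>R W) $ i - T * W $ i\<bar> / T"
    using assms(1) by (simp add: field_simps)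
  ultimately show ?thesis
    using assms(1) by (simp add: add_divide_distrib)
qed

end

locale monotone_homogeneous_map_recession = monotone_homogeneous_map f
  for f :: "real ^ 'n \<Rightarrow> real ^ 'n" +
  fixes g :: "real ^ 'n \<Rightarrow> real ^ 'n"
  assumes recession: "is_recession_function f g"
begin

lemma g_vexp_pos: "0 < g (vexp W) $ i"
  using recession vexp_in_pos_cone unfolding is_recession_function_def pos_cone_def by blast

lemma log_map_recession:
  "(\<lambda>k. log_map f (real k *\<^sub>R W) $ i / real k) \<longlonglongrightarrow> ln (g (vexp W) $ i)"
proof -
  have "(\<lambda>k. \<chi> i. (f (\<chi> j. vexp W $ j ^ k) $ i) powr (1 / real k)) \<longlonglongrightarrow> g (vexp W)"
    using recession vexp_in_pos_cone unfolding is_recession_function_def by blast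
  then have "(\<lambda>k. (f (\<chi> j. vexp W $ j ^ k) $ i) powr (1 / real k)) \<longlonglongrightarrow> g (vexp W) $ i"
    using tendsto_vec_nth[of _ _ _ i] by fastforce
  then have lim: "(\<lambda>k. ln ((f (\<chi> j. vexp W $ j ^ k) $ i) powr (1 / real k))) \<longlonglongrightarrow> ln (g (vexp W) $ i)"
    using g_vexp_pos[of W i] by (intro tendsto_ln) auto
  have eq: "ln ((f (\<chi> j. vexp W $ j ^ k) $ i) powr (1 / real k)) = log_map f (real k *\<^sub>R W) $ i / real k" for k
  proof -
    have "(\<chi> j. vexp W $ j ^ k) = vexp (real k *\<^sub>R W)"
      by (simp add: vexp_def vec_eq_iff flip: exp_of_nat_mult)
    then show ?thesis
      using f_vexp_pos by (simp add: log_map_def vln_def)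
  qed
  show ?thesis
    using lim unfolding eq .
qed

lemma fixed_point_of_limit_direction:
  fixes t :: "nat \<Rightarrow> nat"
  assumes t: "filterlim t at_top sequentially" and Z: "Z \<longlonglongrightarrow> W"
    and almost_fixed: "\<And>k j. \<bar>log_map f (real (t k) *\<^sub>R Z k) $ j - real (t k) * Z k $ j\<bar> \<le> A"
  shows "g (vexp W) = vexp W"
proof -
  have "ln (g (vexp W) $ i) = W $ i" for i
  proof (rule LIMSEQ_unique)
    show "(\<lambda>k. log_map f (real (t k) *\<^sub>R W) $ i / real (t k)) \<longlonglongrightarrow> ln (g (vexp W) $ i)"
      using filterlim_compose[OF log_map_recession t] .
    have "\<forall>\<^sub>F k in sequentially. 1 \<le> t k"
      using t filterlim_at_top by blast
    then have "\<forall>\<^sub>F k in sequentially. norm (log_map f (real (t k) *\<^sub>R W) $ i / real (t k) - W $ i)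
        \<le> A / real (t k) + 2 * norm (Z k - W)"
      by eventually_elim (simp add: log_map_scaled_dist almost_fixed)
    moreover have "(\<lambda>k. A / real (t k) + 2 * norm (Z k - W)) \<longlonglongrightarrow> 0"
    proof -
      have "filterlim (\<lambda>k. real (t k)) at_infinity sequentially"
        using filterlim_at_top_imp_at_infinity filterlim_compose[OF filterlim_real_sequentially t] by blast
      then have "(\<lambda>k. A / real (t k)) \<longlonglongrightarrow> 0"
        by (rule tendsto_divide_0[OF tendsto_const])
      moreover have "(\<lambda>k. 2 * norm (Z k - W)) \<longlonglongrightarrow> 0"
        using tendsto_mult_right_zero[OF tendsto_norm_zero[OF LIM_zero[OF Z]]] .
      ultimately have "(\<lambda>k. A / real (t k) + 2 * norm (Z k - W)) \<longlonglongrightarrow> 0 + 0"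
        by (rule tendsto_add)
      then show ?thesis
        by simp
    qed
    ultimately show "(\<lambda>k. log_map f (real (t k) *\<^sub>R W) $ i / real (t k)) \<longlonglongrightarrow> W $ i"
      by (rule LIM_zero_cancel[OF Lim_null_comparison])
  qed
  then have "g (vexp W) $ i = vexp W $ i" for i
    using exp_ln[OF g_vexp_pos[of W i]] by (simp add: vexp_def)
  then show ?thesis
    by (simp add: vec_eq_iff)
qed

lemma osc_bounded_if_eigenvectors_constant:
  assumes eigenvectors: "\<forall>x. eigenvector_on_cone g x \<longrightarrow> (\<exists>c::real. 0 < c \<and> x = c *\<^sub>R (\<chi> i. 1))"
  shows "\<exists>B. \<forall>X. (\<forall>i. \<bar>log_map f X $ i - X $ i\<bar> \<le> A) \<longrightarrow> osc X \<le> B"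
proof (rule ccontr)
  assume "\<not> ?thesis"
  then have "\<forall>k::nat. \<exists>X. (\<forall>i. \<bar>log_map f X $ i - X $ i\<bar> \<le> A) \<and> real k + 1 \<le> osc X"
    by (meson linorder_not_le less_imp_le)
  then obtain X where X_almost_fixed: "\<And>k i. \<bar>log_map f (X k) $ i - X k $ i\<bar> \<le> A"
    and X_large: "\<And>k. real k + 1 \<le> osc (X k)"
    by metis
  have "\<exists>T c Z. osc (X k) \<le> real T \<and> X k = real T *\<^sub>R Z + c *\<^sub>R 1 \<and> Z \<in> cbox (-1) 0 \<and> 1/2 \<le> osc Z" for k
  proof -
    have "1 \<le> osc (X k)"
      using X_large[of k] by simp
    then show ?thesis
      by (rule exists_normalized_direction) blast
  qed
  then obtain T c Z where T_large: "\<And>k. osc (X k) \<le> real (T k)"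
    and X_eq: "\<And>k. X k = real (T k) *\<^sub>R Z k + c k *\<^sub>R 1"
    and Z_box: "\<And>k. Z k \<in> cbox (-1) 0" and Z_osc: "\<And>k. 1/2 \<le> osc (Z k)"
    by metis
  have Z_almost_fixed: "\<bar>log_map f (real (T k) *\<^sub>R Z k) $ i - real (T k) * Z k $ i\<bar> \<le> A" for k i
    using X_almost_fixed[of k i] by (simp add: X_eq log_map_translate)
  obtain W r where r: "strict_mono r" and Z_lim: "(Z \<circ> r) \<longlonglongrightarrow> W"
    using seq_compactE[OF compact_imp_seq_compact[OF compact_cbox]] Z_box by metis
  have "k \<le> T k" for k
    using X_large[of k] T_large[of k] by linarith
  then have "filterlim T at_top sequentially"
    by (intro filterlim_at_top_mono[OF filterlim_ident] always_eventually) blast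
  then have "filterlim (T \<circ> r) at_top sequentially"
    using filterlim_compose[OF _ filterlim_subseq[OF r]] by (simp add: comp_def)
  then have "g (vexp W) = vexp W"
    using Z_lim Z_almost_fixed by (intro fixed_point_of_limit_direction) auto
  then have "eigenvector_on_cone g (vexp W)"
    unfolding eigenvector_on_cone_def using vexp_in_pos_cone by (metis scaleR_one zero_less_one)
  then obtain a where "vexp W = a *\<^sub>R (\<chi> i. 1)"
    using eigenvectors by blast
  then have "W $ i = ln a" for i
    by (metis ln_exp mult.right_neutral vec_lambda_beta vector_scaleR_component vexp_def real_scaleR_def)
  then have "osc W = 0"
    by (metis osc_attained diff_self)
  have "\<forall>\<^sub>F k in sequentially. dist ((Z \<circ> r) k) W < 1/8"
    using Z_lim by (rule tendstoD) simp
  then obtain N where "dist ((Z \<circ> r) N) W < 1/8"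
    unfolding eventually_sequentially by blast
  then have "osc (Z (r N)) < 1/2"
    using osc_le_osc_add_norm[of "Z (r N)" W] \<open>osc W = 0\<close> by (simp add: dist_norm)
  then show False
    using Z_osc not_le by blast
qed

end

theorem theorem7:
  fixes f g :: "real ^ 'n \<Rightarrow> real ^ 'n"
  assumes "\<forall>x \<in> pos_cone. f x \<in> pos_cone"
    and "homogeneous_on_cone f"
    and "monotone_on_cone f"
    and "is_recession_function f g"
    and "\<forall>x. eigenvector_on_cone g x \<longrightarrow> (\<exists>c::real. 0 < c \<and> x = c *\<^sub>R (\<chi> i. 1))"
    and "0 < l" and "0 < m"
  shows "hilbert_bounded (slice_space l m f)"
proof -
  interpret monotone_homogeneous_map_recession f g
    by unfold_locales (fact assms)+
  obtain B where B: "\<And>X. \<forall>i. \<bar>log_map f X $ i - X $ i\<bar> \<le> \<bar>ln l\<bar> + \<bar>ln m\<bar> \<Longrightarrow> osc X \<le> B"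
    using osc_bounded_if_eigenvectors_constant[OF assms(5)] by blast
  have "\<forall>x \<in> slice_space l m f. osc (vln x) \<le> B"
    using slice_space_log_bound[OF _ assms(6,7)] by (intro ballI B allI)
  moreover have "slice_space l m f \<subseteq> pos_cone"
    by (auto simp: slice_space_def)
  ultimately show ?thesis
    by (intro hilbert_bounded_if_osc_vln_bounded)
qed

end
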